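(* Let $P$ be a decision protocol for the context $\gamma$, and let $S$ and $T$ be indexical sets of agents in $\mathcal{I}_{P,\gamma}$ such that (a) for all points $(r,m)$ and agents $i,j$, if $i\in T(r,m)$ and $j\in T(r,m)$ then there exists a run $r'$ of $\mathcal{I}_{P,\gamma}$ with $(r,m)\sim_i(r',m)$, $(r,m)\sim_j(r',m)$, and $i\in S(r',m)$, $j\in S(r',m)$; (b) $S\subseteq T$ is valid in $\mathcal{I}_{P,\gamma}$; and (c) $T\neq\emptyset\Rightarrow S\neq\emptyset$ is valid in $\mathcal{I}_{P,\gamma}$. Then if SBA($S$) is valid in $\mathcal{I}_{P,\gamma}$, SBA($T$) is valid in $\mathcal{I}_{P,\gamma}$.
   Context: Agents are $\mathrm{Agt}=\{1,\dots,n\}$; $V$ is a set of decision values; agent $i$'s actions are $A_i=\{\mathtt{noop}\}\cup\{\mathtt{decide}_i(v):v\in V\}$. An information exchange $\mathcal{E}$ assigns to each agent $i$ a tuple $(L_i,I_i,M_i,\mu_i,\delta_i)$: local states $L_i$, initial states $I_i\subseteq L_i$, messages $M_i\ni\bot$, $\mu_i:L_i\times A_i\to(\mathrm{Agt}\to M_i)$, and $\delta_i:L_i\times A_i\times\prod_jM_j\to L_i$; local states have the form $\langle\mathit{init}_i,\mathit{time}_i,\dots\rangle$ (possibly also a special state $\mathit{crashed}$) with $\mathit{init}_i\in V$ the initial preference, $\delta_i$ preserving $\mathit{init}_i$ and incrementing $\mathit{time}_i$. A decision protocol $P$ is a family $P_i:L_i\to A_i$. A failure model $\mathcal{F}=(L^*_e,I_e,\delta_e,\mathit{Adv})$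 has environment states, nonempty initial ones $I_e$, update $\delta_e:L^*_e\times\prod_iA_i\to L^*_e$, and a nonempty set $\mathit{Adv}$ of adversaries $(\Delta^t,\Delta^r,\Delta^s)$ with $\Delta^t,\Delta^r:\mathbb{N}\times\mathrm{Agt}\times\mathrm{Agt}\times\bigcup_iM_i\to\bigcup_iM_i$ and $\Delta^s_i:\mathbb{N}\times L_i\to L_i$ (not changing $\mathit{time}_i$). A context is $\gamma=(\mathcal{E},\mathcal{F})$. The runs of $\mathcal{I}_{P,\gamma}$ are the $r$ with $r(0)=((s_e,\alpha),s_1,\dots,s_n)$, $s_e\in I_e$, $\alpha=(\Delta^t,\Delta^r,\Delta^s)\in\mathit{Adv}$, $s_i\in I_i$, and if $r(k)=((s_e,\alpha),s_1,\dots,s_n)$ then $r(k+1)=((\delta_e(s_e,(a_1,\dots,a_n)),\alpha),s'_1,\dots,s'_n)$ where $a_i=P_i(s_i)$ (the action of $i$ at time $k$), $m_{i,j}=\mu_i(s_i,a_i)(j)$, $m'_{i,j}=\Delta^r(k,i,j,\Delta^t(k,i,j,m_{i,j}))$, $s^*_j=\delta_j(s_j,a_j,(m'_{1,j},\dots,m'_{n,j}))$, $s'_j=\Delta^s_j(k,s^*_j)$. $r_i(m)$ is agent $i$'s local state at time $m$ and $(r,m)\sim_i(r',m')$ iff $r_i(m)=r'_i(m')$. An indexical set $S$ assigns a set $S(r,m)\subseteq\mathrm{Agt}$ to each point; formulas such as $S\subseteq T$, $S\neq\emptyset$ are evaluated pointwise, and validity means truth at all points. SBA($S$) is valid in $\mathcal{I}_{P,\gamma}$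 if in every run $r$: (Unique-Decision) each agent $i$ performs an action $\mathtt{decide}_i(v)$ at most once; (Simultaneous-Agreement($S$)) if $i\in S(r,m)$ performs $\mathtt{decide}_i(v)$ at time $m$ then every $j\in S(r,m)$ performs $\mathtt{decide}_j(v)$ at time $m$; (Validity($S$)) if $i\in S(r,m)$ performs $\mathtt{decide}_i(v)$ at time $m$ then some agent $j$ has $\mathit{init}_j=v$ in $r$. *)

theory Defs
  imports Main
begin

text \<open>Agents are the elements of a finite type 'agt (so n = CARD('agt)).
  Actions of agent i: noop, or decide_i(v); the agent index is implicit,
  since the protocol is indexed by agents.\<close>

datatype 'v action = Noop | Decide 'v

text \<open>All agents' local states live in a common type 'l and all messages in a common
  type 'msg; the per-agent sets L_i, I_i, M_i carve out the actual ones.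
  Local states carry init_i and time_i (given by the functions init, time);
  crashed i is the (optional) special state crashed of agent i.\<close>

record ('agt, 'l, 'msg, 'v) info_exchange =
  L :: "'agt \<Rightarrow> 'l set"
  I :: "'agt \<Rightarrow> 'l set"
  M :: "'agt \<Rightarrow> 'msg set"
  bot :: "'msg"
  mu :: "'agt \<Rightarrow> 'l \<Rightarrow> 'v action \<Rightarrow> 'agt \<Rightarrow> 'msg"
  delta :: "'agt \<Rightarrow> 'l \<Rightarrow> 'v action \<Rightarrow> ('agt \<Rightarrow> 'msg) \<Rightarrow> 'l"
  init :: "'agt \<Rightarrow> 'l \<Rightarrow> 'v"
  time :: "'agt \<Rightarrow> 'l \<Rightarrow> nat"
  crashed :: "'agt \<Rightarrow> 'l option"

definition noncrashed :: "('agt, 'l, 'msg, 'v) info_exchange \<Rightarrow> 'agt \<Rightarrow> 'l \<Rightarrow> bool" where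
  "noncrashed E i s \<longleftrightarrow> crashed E i \<noteq> Some s"

definition wf_info_exchange :: "('agt, 'l, 'msg, 'v) info_exchange \<Rightarrow> bool" where
  "wf_info_exchange E \<longleftrightarrow>
     (\<forall>i. I E i \<subseteq> L E i \<and> bot E \<in> M E i
        \<and> (\<forall>s \<in> I E i. noncrashed E i s)
        \<and> (\<forall>s a j. s \<in> L E i \<longrightarrow> mu E i s a j \<in> M E i)
        \<and> (\<forall>s a ms. s \<in> L E i \<longrightarrow> (\<forall>j. ms j \<in> M E j) \<longrightarrow>
              delta E i s a ms \<in> L E i
            \<and> (noncrashed E i s \<longrightarrow> noncrashed E i (delta E i s a ms) \<longrightarrow>
                 init E i (delta E i s a ms) = init E i s
               \<and> time E i (delta E i s a ms) = Suc (time E i s))))"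

record ('agt, 'l, 'msg) adversary =
  Dt :: "nat \<Rightarrow> 'agt \<Rightarrow> 'agt \<Rightarrow> 'msg \<Rightarrow> 'msg"
  Dr :: "nat \<Rightarrow> 'agt \<Rightarrow> 'agt \<Rightarrow> 'msg \<Rightarrow> 'msg"
  Ds :: "'agt \<Rightarrow> nat \<Rightarrow> 'l \<Rightarrow> 'l"

record ('agt, 'e, 'l, 'msg, 'v) failure_model =
  Le :: "'e set"
  Ie :: "'e set"
  delta_e :: "'e \<Rightarrow> ('agt \<Rightarrow> 'v action) \<Rightarrow> 'e"
  Adv :: "('agt, 'l, 'msg) adversary set"

type_synonym ('agt, 'e, 'l, 'msg, 'v) ctxt =
  "('agt, 'l, 'msg, 'v) info_exchange \<times> ('agt, 'e, 'l, 'msg, 'v) failure_model"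

definition wf_context :: "('agt, 'e, 'l, 'msg, 'v) ctxt \<Rightarrow> bool" where
  "wf_context \<gamma> \<longleftrightarrow> (case \<gamma> of (E, F) \<Rightarrow>
     wf_info_exchange E
     \<and> Ie F \<noteq> {} \<and> Ie F \<subseteq> Le F
     \<and> (\<forall>s a. s \<in> Le F \<longrightarrow> delta_e F s a \<in> Le F)
     \<and> Adv F \<noteq> {}
     \<and> (\<forall>\<alpha> \<in> Adv F.
          (\<forall>k i j m. m \<in> (\<Union>x. M E x) \<longrightarrow> Dt \<alpha> k i j m \<in> (\<Union>x. M E x))
        \<and> (\<forall>k i j m. m \<in> (\<Union>x. M E x) \<longrightarrow> Dr \<alpha> k i j m \<in> (\<Union>x. M E x))
        \<and> (\<forall>i k s. s \<in> L E i \<longrightarrow> Ds \<alpha> i k s \<in> L E i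
              \<and> (noncrashed E i s \<longrightarrow> noncrashed E i (Ds \<alpha> i k s) \<longrightarrow>
                   time E i (Ds \<alpha> i k s) = time E i s))))"

type_synonym ('agt, 'l, 'v) protocol = "'agt \<Rightarrow> 'l \<Rightarrow> 'v action"

type_synonym ('agt, 'e, 'l, 'msg) gstate = "('e \<times> ('agt, 'l, 'msg) adversary) \<times> ('agt \<Rightarrow> 'l)"
type_synonym ('agt, 'e, 'l, 'msg) run = "nat \<Rightarrow> ('agt, 'e, 'l, 'msg) gstate"

definition lstate :: "('agt, 'e, 'l, 'msg) run \<Rightarrow> 'agt \<Rightarrow> nat \<Rightarrow> 'l" where
  "lstate r i m = snd (r m) i"

definition next_gstate ::
  "('agt, 'l, 'v) protocol \<Rightarrow> ('agt, 'e, 'l, 'msg, 'v) ctxt \<Rightarrow> nat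
   \<Rightarrow> ('agt, 'e, 'l, 'msg) gstate \<Rightarrow> ('agt, 'e, 'l, 'msg) gstate" where
  "next_gstate P \<gamma> k g = (case \<gamma> of (E, F) \<Rightarrow> (case g of ((se, \<alpha>), s) \<Rightarrow>
     let a = (\<lambda>i. P i (s i));
         msg = (\<lambda>i j. mu E i (s i) (a i) j);
         msg' = (\<lambda>i j. Dr \<alpha> k i j (Dt \<alpha> k i j (msg i j)));
         sstar = (\<lambda>j. delta E j (s j) (a j) (\<lambda>i. msg' i j));
         s' = (\<lambda>j. Ds \<alpha> j k (sstar j))
     in ((delta_e F se a, \<alpha>), s')))"

definition runs :: "('agt, 'l, 'v) protocol \<Rightarrow> ('agt, 'e, 'l, 'msg, 'v) ctxt
   \<Rightarrow> ('agt, 'e, 'l, 'msg) run set" where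
  "runs P \<gamma> = {r. (case \<gamma> of (E, F) \<Rightarrow> (case r 0 of ((se, \<alpha>), s) \<Rightarrow>
        se \<in> Ie F \<and> \<alpha> \<in> Adv F \<and> (\<forall>i. s i \<in> I E i)))
     \<and> (\<forall>k. r (Suc k) = next_gstate P \<gamma> k (r k))}"

definition indist :: "('agt, 'e, 'l, 'msg) run \<Rightarrow> nat \<Rightarrow> 'agt \<Rightarrow> ('agt, 'e, 'l, 'msg) run \<Rightarrow> nat \<Rightarrow> bool" where
  "indist r m i r' m' \<longleftrightarrow> lstate r i m = lstate r' i m'"

definition act :: "('agt, 'l, 'v) protocol \<Rightarrow> ('agt, 'e, 'l, 'msg) run \<Rightarrow> 'agt \<Rightarrow> nat \<Rightarrow> 'v action" where
  "act P r i m = P i (lstate r i m)"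

type_synonym ('agt, 'e, 'l, 'msg) indexical = "('agt, 'e, 'l, 'msg) run \<Rightarrow> nat \<Rightarrow> 'agt set"

text \<open>SBA(S) valid in I_{P,gamma}. The initial preference init_j of j in r is
  the init component of its local state (preserved along the run); we read it
  at time 0.\<close>

definition SBA_valid :: "('agt, 'l, 'v) protocol \<Rightarrow> ('agt, 'e, 'l, 'msg, 'v) ctxt
   \<Rightarrow> ('agt, 'e, 'l, 'msg) indexical \<Rightarrow> bool" where
  "SBA_valid P \<gamma> S \<longleftrightarrow> (\<forall>r \<in> runs P \<gamma>.
     (\<forall>i m m' v v'. act P r i m = Decide v \<and> act P r i m' = Decide v' \<longrightarrow> m = m')
   \<and> (\<forall>m i v. i \<in> S r m \<and> act P r i m = Decide v \<longrightarrow>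
        (\<forall>j \<in> S r m. act P r j m = Decide v))
   \<and> (\<forall>m i v. i \<in> S r m \<and> act P r i m = Decide v \<longrightarrow>
        (\<exists>j. init (fst \<gamma>) j (lstate r j 0) = v)))"

end

theory Submission
  imports Defs
begin

text \<open>For any two agents of T at a point, hypothesis (a) provides a point that neither of
  them can tell apart from the first and at which both lie in S; there they perform the
  same actions as before, so simultaneous agreement for S carries over to T. Validity
  for T then follows by routing a decision through a member of S, which exists by (c),
  lies in T by (b), and hence decides the same value.\<close>

lemma SBA_validI:
  assumes "\<And>r i m m' v v'. r \<in> runs P \<gamma> \<Longrightarrow> act P r i m = Decide v \<Longrightarrow>
             act P r i m' = Decide v' \<Longrightarrow> m = m'"
    and "\<And>r m i j v. r \<in> runs P \<gamma> \<Longrightarrow> i \<in> S r m \<Longrightarrow> j \<in> S r m \<Longrightarrow>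
             act P r i m = Decide v \<Longrightarrow> act P r j m = Decide v"
    and "\<And>r m i v. r \<in> runs P \<gamma> \<Longrightarrow> i \<in> S r m \<Longrightarrow> act P r i m = Decide v \<Longrightarrow>
             \<exists>j. init (fst \<gamma>) j (lstate r j 0) = v"
  shows "SBA_valid P \<gamma> S"
  unfolding SBA_valid_def using assms by blast

lemma SBA_valid_unique_decision:
  assumes "SBA_valid P \<gamma> S" "r \<in> runs P \<gamma>"
    and "act P r i m = Decide v" "act P r i m' = Decide v'"
  shows "m = m'"
  using assms unfolding SBA_valid_def by blast

lemma SBA_valid_agreement:
  assumes "SBA_valid P \<gamma> S" "r \<in> runs P \<gamma>" "i \<in> S r m" "j \<in> S r m"
    and "act P r i m = Decide v"
  shows "act P r j m = Decide v"
  using assms unfolding SBA_valid_def by blast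

lemma SBA_valid_validity:
  assumes "SBA_valid P \<gamma> S" "r \<in> runs P \<gamma>" "i \<in> S r m"
    and "act P r i m = Decide v"
  shows "\<exists>j. init (fst \<gamma>) j (lstate r j 0) = v"
  using assms unfolding SBA_valid_def by blast

lemma act_eq_if_indist:
  assumes "indist r m i r' m'"
  shows "act P r i m = act P r' i m'"
  using assms by (simp add: act_def indist_def)

lemma SBA_valid_agreement_if_indist_in:
  assumes sbaS: "SBA_valid P \<gamma> S"
    and indist_in_S: "\<forall>r \<in> runs P \<gamma>. \<forall>m i j. i \<in> T r m \<and> j \<in> T r m \<longrightarrow>
              (\<exists>r' \<in> runs P \<gamma>. indist r m i r' m \<and> indist r m j r' m
                 \<and> i \<in> S r' m \<and> j \<in> S r' m)"
    and r: "r \<in> runs P \<gamma>" and i: "i \<in> T r m" and j: "j \<in> T r m"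
    and decide: "act P r i m = Decide v"
  shows "act P r j m = Decide v"
proof -
  obtain r' where r': "r' \<in> runs P \<gamma>"
    and indist_i: "indist r m i r' m" and indist_j: "indist r m j r' m"
    and "i \<in> S r' m" "j \<in> S r' m"
    using indist_in_S r i j by blast
  moreover have "act P r' i m = Decide v"
    using decide act_eq_if_indist[OF indist_i, of P] by simp
  ultimately have "act P r' j m = Decide v"
    using SBA_valid_agreement[OF sbaS] by blast
  then show ?thesis
    using act_eq_if_indist[OF indist_j, of P] by simp
qed

theorem proposition4:
  fixes P :: "('agt::finite, 'l, 'v) protocol"
    and \<gamma> :: "('agt, 'e, 'l, 'msg, 'v) ctxt"
    and S T :: "('agt, 'e, 'l, 'msg) indexical"
  assumes ctx: "wf_context \<gamma>"
    and a: "\<forall>r \<in> runs P \<gamma>. \<forall>m i j. i \<in> T r m \<and> j \<in> T r m \<longrightarrow>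
              (\<exists>r' \<in> runs P \<gamma>. indist r m i r' m \<and> indist r m j r' m
                 \<and> i \<in> S r' m \<and> j \<in> S r' m)"
    and b: "\<forall>r \<in> runs P \<gamma>. \<forall>m. S r m \<subseteq> T r m"
    and c: "\<forall>r \<in> runs P \<gamma>. \<forall>m. T r m \<noteq> {} \<longrightarrow> S r m \<noteq> {}"
    and sbaS: "SBA_valid P \<gamma> S"
  shows "SBA_valid P \<gamma> T"
proof (rule SBA_validI)
  note agreement_T = SBA_valid_agreement_if_indist_in[OF sbaS a]
  show "m = m'" if "r \<in> runs P \<gamma>" "act P r i m = Decide v" "act P r i m' = Decide v'"
    for r i m m' v v'
    using SBA_valid_unique_decision[OF sbaS] that by blast
  show "act P r j m = Decide v"
    if "r \<in> runs P \<gamma>" "i \<in> T r m" "j \<in> T r m" "act P r i m = Decide v" for r m i j v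
    using agreement_T that .
  show "\<exists>j. init (fst \<gamma>) j (lstate r j 0) = v"
    if r: "r \<in> runs P \<gamma>" and i: "i \<in> T r m" and decide: "act P r i m = Decide v"
    for r m i v
  proof -
    obtain k where k: "k \<in> S r m"
      using c r i by blast
    with b r have "k \<in> T r m" by blast
    with r i decide have "act P r k m = Decide v"
      using agreement_T by blast
    then show ?thesis
      by (rule SBA_valid_validity[OF sbaS r k])
  qed
qed

end
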